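(* For every program $C$, all hyperquantities $ff,gg$ and every real constant $r\ge0$, $$\mathrm{whp}[C](r\cdot ff\cdot gg)=r\cdot\mathrm{whp}[C](ff)\cdot\mathrm{whp}[C](gg),$$ where products of hyperquantities are pointwise in $[0,+\infty]$.
   Context: Semiring. Fix $\mathcal A=\langle U,\oplus,\odot,\mathbb 0,\mathbb 1\rangle$, a possibly partial semiring: $\langle U,\oplus,\mathbb 0\rangle$ is a commutative monoid in which $\oplus$ may be partial, $\langle U,\odot,\mathbb 1\rangle$ is a (total) monoid, $\odot$ distributes over $\oplus$ on both sides, and $\mathbb 0\odot u=u\odot\mathbb 0=\mathbb 0$. The natural order is $u\le v$ iff $u\oplus w=v$ for some $w\in U$. Standing assumptions: $\le$ is a complete partial order; $\mathcal A$ is complete (there is an infinitary sum $\bigoplus_{i\in I}$ that agrees with $\oplus$ on finite index sets, satisfies $v\odot\bigoplus_i u_i=\bigoplus_i v\odot u_i$ and $(\bigoplus_i u_i)\odot v=\bigoplus_i u_i\odot v$ whenever defined, and is invariant under partitioning the index set); $\mathcal A$ is Scott continuous; and $U$ has a greatest element. States and quantities. $\mathrm{Vars}$ finite, $\Sigma=\{\sigma:\mathrm{Vars}\to\mathbb N\}$, $\sigma[x\mapsto v]$ updated state; expressions denote $\llbracket e\rrbracket:\Sigma\to\mathbb N\cup U$. A quantity is $f:\Sigma\to U$; $\mathbb A$ the set of quantities; operations lifted pointwise; $[\varphi](\sigma)=\mathbb 1$ if $\sigma\models\varphi$, else $\mathbb 0$; $f[x/\alpha]=\sigma\mapsto f(\sigma[x\mapsto\alpha])$.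 Programs $C::= x:=e\mid x:=\ast\mid \mathtt{weight}\ e\mid C;C\mid C+C\mid \mathtt{iter}(C,e,e')$, assumed well-formed so that all sums arising are defined. Strongest post $\mathrm{sp}[C]:\mathbb A\to\mathbb A$: $\mathrm{sp}[x:=e](f)=\bigoplus_{\alpha\in\mathbb N}f[x/\alpha]\odot[x=e[x/\alpha]]$ with $[x=e[x/\alpha]](\sigma)=\mathbb 1$ iff $\sigma(x)=\llbracket e\rrbracket(\sigma[x\mapsto\alpha])$; $\mathrm{sp}[x:=\ast](f)=\bigoplus_{\alpha}f[x/\alpha]$; $\mathrm{sp}[\mathtt{weight}\ w](f)=f\odot\llbracket w\rrbracket$; $\mathrm{sp}[C_1;C_2](f)=\mathrm{sp}[C_2](\mathrm{sp}[C_1](f))$; $\mathrm{sp}[C_1+C_2](f)=\mathrm{sp}[C_1](f)\oplus\mathrm{sp}[C_2](f)$; $\mathrm{sp}[\mathtt{iter}(C,e,e')](f)=\big(\mathrm{lfp}\,X.\ f\oplus\mathrm{sp}[C](X\odot\llbracket e\rrbracket)\big)\odot\llbracket e'\rrbracket$ (pointwise natural order on $\mathbb A$). Hyperquantities. A hyperquantity is a function $ff:\mathbb A\to[0,+\infty]$. For $\nu\in\mathbb A$, $\chi_\nu(g)=1$ if $g=\nu$ and $0$ otherwise. Arithmetic on values in $[0,+\infty]$ with $0\cdot\infty=0$. Weakest hyper pre $\mathrm{whp}[C]$, defined inductively: $\mathrm{whp}[x:=e](ff)=\lambda f.\ ff(\mathrm{sp}[x:=e](f))$; $\mathrm{whp}[x:=\ast](ff)=\lambda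 f.\ ff(\bigoplus_{\alpha}f[x/\alpha])$; $\mathrm{whp}[\mathtt{weight}\ w](ff)=\lambda f.\ ff(f\odot\llbracket w\rrbracket)$; $\mathrm{whp}[C_1;C_2](ff)=\mathrm{whp}[C_1](\mathrm{whp}[C_2](ff))$; $\mathrm{whp}[C_1+C_2](ff)=\lambda f.\ \sum_{\nu_1,\nu_2\in\mathbb A}ff(\nu_1\oplus\nu_2)\cdot\mathrm{whp}[C_1](\chi_{\nu_1})(f)\cdot\mathrm{whp}[C_2](\chi_{\nu_2})(f)$ (terms with $\nu_1\oplus\nu_2$ undefined omitted); $\mathrm{whp}[\mathtt{iter}(C,e,e')](ff)=\lambda f.\ ff\big((\mathrm{lfp}\,X.\ f\oplus\mathrm{sp}[C](X\odot\llbracket e\rrbracket))\odot\llbracket e'\rrbracket\big)$. *)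

theory Defs
  imports "HOL-Analysis.Analysis"
begin

record 'u psr =
  sadd  :: "'u \<Rightarrow> 'u \<Rightarrow> 'u option"
  smul  :: "'u \<Rightarrow> 'u \<Rightarrow> 'u"
  szero :: 'u
  sone  :: 'u
  ssum  :: "nat set \<Rightarrow> (nat \<Rightarrow> 'u) \<Rightarrow> 'u option"

definition nle :: "'u psr \<Rightarrow> 'u \<Rightarrow> 'u \<Rightarrow> bool" where
  "nle A u v \<longleftrightarrow> (\<exists>w. sadd A u w = Some v)"

definition is_lub :: "'u psr \<Rightarrow> 'u set \<Rightarrow> 'u \<Rightarrow> bool" where
  "is_lub A S s \<longleftrightarrow> (\<forall>u\<in>S. nle A u s) \<and> (\<forall>t. (\<forall>u\<in>S. nle A u t) \<longrightarrow> nle A s t)"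

inductive fsum_rel :: "'u psr \<Rightarrow> (nat \<Rightarrow> 'u) \<Rightarrow> nat set \<Rightarrow> 'u \<Rightarrow> bool"
  for A a where
  fsum_empty: "fsum_rel A a {} (szero A)"
| fsum_insert: "i \<notin> I \<Longrightarrow> fsum_rel A a I s \<Longrightarrow> sadd A (a i) s = Some t
                  \<Longrightarrow> fsum_rel A a (insert i I) t"

definition partial_semiring :: "'u psr \<Rightarrow> bool" where
  "partial_semiring A \<longleftrightarrow>
     \<comment> \<open>commutative partial monoid\<close>
     (\<forall>a b. sadd A a b = sadd A b a) \<and>
     (\<forall>a b c. Option.bind (sadd A a b) (\<lambda>x. sadd A x c)
            = Option.bind (sadd A b c) (\<lambda>y. sadd A a y)) \<and>
     (\<forall>a. sadd A (szero A) a = Some a) \<and>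
     \<comment> \<open>total monoid\<close>
     (\<forall>a b c. smul A (smul A a b) c = smul A a (smul A b c)) \<and>
     (\<forall>a. smul A (sone A) a = a \<and> smul A a (sone A) = a) \<and>
     \<comment> \<open>distributivity on both sides\<close>
     (\<forall>a b c d. sadd A b c = Some d \<longrightarrow>
         sadd A (smul A a b) (smul A a c) = Some (smul A a d) \<and>
         sadd A (smul A b a) (smul A c a) = Some (smul A d a)) \<and>
     \<comment> \<open>annihilation\<close>
     (\<forall>a. smul A (szero A) a = szero A \<and> smul A a (szero A) = szero A)"

definition complete_po :: "'u psr \<Rightarrow> bool" where
  "complete_po A \<longleftrightarrow>
     (\<forall>u v. nle A u v \<longrightarrow> nle A v u \<longrightarrow> u = v) \<and>
     (\<forall>S. Complete_Partial_Order.chain (nle A) S \<longrightarrow> (\<exists>s. is_lub A S s))"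

definition complete_sum :: "'u psr \<Rightarrow> bool" where
  "complete_sum A \<longleftrightarrow>
     (\<forall>I a s. finite I \<longrightarrow> (ssum A I a = Some s \<longleftrightarrow> fsum_rel A a I s)) \<and>
     (\<forall>I a s v. ssum A I a = Some s \<longrightarrow>
         ssum A I (\<lambda>i. smul A v (a i)) = Some (smul A v s) \<and>
         ssum A I (\<lambda>i. smul A (a i) v) = Some (smul A s v)) \<and>
     (\<forall>I J P a b. disjoint_family_on P J \<longrightarrow> (\<Union>j\<in>J. P j) = I \<longrightarrow>
         (\<forall>j\<in>J. ssum A (P j) a = Some (b j)) \<longrightarrow> ssum A I a = ssum A J b)"

definition scott_continuous :: "'u psr \<Rightarrow> bool" where
  "scott_continuous A \<longleftrightarrow>
     (\<forall>S s v. S \<noteq> {} \<longrightarrow> Complete_Partial_Order.chain (nle A) S \<longrightarrow> is_lub A S s \<longrightarrow>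
        is_lub A (smul A v ` S) (smul A v s) \<and>
        is_lub A ((\<lambda>u. smul A u v) ` S) (smul A s v) \<and>
        (\<forall>t. sadd A s v = Some t \<longrightarrow> is_lub A {x. \<exists>u\<in>S. sadd A u v = Some x} t))"

definition has_top :: "'u psr \<Rightarrow> bool" where
  "has_top A \<longleftrightarrow> (\<exists>t. \<forall>u. nle A u t)"

definition semiring_assms :: "'u psr \<Rightarrow> bool" where
  "semiring_assms A \<longleftrightarrow> partial_semiring A \<and> complete_po A \<and> complete_sum A
                          \<and> scott_continuous A \<and> has_top A"

text \<open>States are functions from variables to nat with finitely many variables; expressions are given
semantically.\<close>

datatype ('v, 'u) prog =
    Assign 'v "('v \<Rightarrow> nat) \<Rightarrow> nat"
  | Havoc 'v
  | Weight "('v \<Rightarrow> nat) \<Rightarrow> 'u"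
  | Seq "('v, 'u) prog" "('v, 'u) prog"
  | Choice "('v, 'u) prog" "('v, 'u) prog"
  | Iter "('v, 'u) prog" "('v \<Rightarrow> nat) \<Rightarrow> 'u" "('v \<Rightarrow> nat) \<Rightarrow> 'u"

definition qsum :: "'u psr \<Rightarrow> (nat \<Rightarrow> ('v \<Rightarrow> nat) \<Rightarrow> 'u) \<Rightarrow> (('v \<Rightarrow> nat) \<Rightarrow> 'u) option" where
  "qsum A F = (if (\<forall>\<sigma>. ssum A UNIV (\<lambda>i. F i \<sigma>) \<noteq> None)
               then Some (\<lambda>\<sigma>. the (ssum A UNIV (\<lambda>i. F i \<sigma>))) else None)"

definition qadd :: "'u psr \<Rightarrow> (('v \<Rightarrow> nat) \<Rightarrow> 'u) \<Rightarrow> (('v \<Rightarrow> nat) \<Rightarrow> 'u) \<Rightarrow> (('v \<Rightarrow> nat) \<Rightarrow> 'u) option" where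
  "qadd A f g = (if (\<forall>\<sigma>. sadd A (f \<sigma>) (g \<sigma>) \<noteq> None)
                 then Some (\<lambda>\<sigma>. the (sadd A (f \<sigma>) (g \<sigma>))) else None)"

definition qmul :: "'u psr \<Rightarrow> (('v \<Rightarrow> nat) \<Rightarrow> 'u) \<Rightarrow> (('v \<Rightarrow> nat) \<Rightarrow> 'u) \<Rightarrow> ('v \<Rightarrow> nat) \<Rightarrow> 'u" where
  "qmul A f g = (\<lambda>\<sigma>. smul A (f \<sigma>) (g \<sigma>))"

definition qle :: "'u psr \<Rightarrow> (('v \<Rightarrow> nat) \<Rightarrow> 'u) \<Rightarrow> (('v \<Rightarrow> nat) \<Rightarrow> 'u) \<Rightarrow> bool" where
  "qle A f g \<longleftrightarrow> (\<forall>\<sigma>. nle A (f \<sigma>) (g \<sigma>))"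

definition ind :: "'u psr \<Rightarrow> bool \<Rightarrow> 'u" where
  "ind A b = (if b then sone A else szero A)"

definition plfp :: "'u psr \<Rightarrow> ((('v \<Rightarrow> nat) \<Rightarrow> 'u) \<Rightarrow> (('v \<Rightarrow> nat) \<Rightarrow> 'u) option)
                     \<Rightarrow> (('v \<Rightarrow> nat) \<Rightarrow> 'u) option" where
  "plfp A F = (if (\<exists>X. F X = Some X \<and> (\<forall>Y. F Y = Some Y \<longrightarrow> qle A X Y))
               then Some (THE X. F X = Some X \<and> (\<forall>Y. F Y = Some Y \<longrightarrow> qle A X Y))
               else None)"

primrec sp :: "'u psr \<Rightarrow> ('v, 'u) prog \<Rightarrow> (('v \<Rightarrow> nat) \<Rightarrow> 'u) \<Rightarrow> (('v \<Rightarrow> nat) \<Rightarrow> 'u) option" where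
  "sp A (Assign x e) f =
     qsum A (\<lambda>\<alpha> \<sigma>. smul A (f (\<sigma>(x := \<alpha>))) (ind A (\<sigma> x = e (\<sigma>(x := \<alpha>)))))"
| "sp A (Havoc x) f = qsum A (\<lambda>\<alpha> \<sigma>. f (\<sigma>(x := \<alpha>)))"
| "sp A (Weight w) f = Some (qmul A f w)"
| "sp A (Seq C1 C2) f = Option.bind (sp A C1 f) (sp A C2)"
| "sp A (Choice C1 C2) f =
     Option.bind (sp A C1 f) (\<lambda>g1. Option.bind (sp A C2 f) (\<lambda>g2. qadd A g1 g2))"
| "sp A (Iter C e e') f =
     map_option (\<lambda>X. qmul A X e')
       (plfp A (\<lambda>X. Option.bind (sp A C (qmul A X e)) (qadd A f)))"

definition chi :: "(('v \<Rightarrow> nat) \<Rightarrow> 'u) \<Rightarrow> (('v \<Rightarrow> nat) \<Rightarrow> 'u) \<Rightarrow> ennreal" where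
  "chi \<nu> = (\<lambda>g. if g = \<nu> then 1 else 0)"

definition app_opt :: "((('v \<Rightarrow> nat) \<Rightarrow> 'u) \<Rightarrow> ennreal) \<Rightarrow> (('v \<Rightarrow> nat) \<Rightarrow> 'u) option \<Rightarrow> ennreal" where
  "app_opt ff oq = (case oq of None \<Rightarrow> 0 | Some g \<Rightarrow> ff g)"

primrec whp :: "'u psr \<Rightarrow> ('v, 'u) prog \<Rightarrow> ((('v \<Rightarrow> nat) \<Rightarrow> 'u) \<Rightarrow> ennreal)
                 \<Rightarrow> (('v \<Rightarrow> nat) \<Rightarrow> 'u) \<Rightarrow> ennreal" where
  "whp A (Assign x e) ff = (\<lambda>f. app_opt ff (sp A (Assign x e) f))"
| "whp A (Havoc x) ff = (\<lambda>f. app_opt ff (qsum A (\<lambda>\<alpha> \<sigma>. f (\<sigma>(x := \<alpha>)))))"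
| "whp A (Weight w) ff = (\<lambda>f. ff (qmul A f w))"
| "whp A (Seq C1 C2) ff = whp A C1 (whp A C2 ff)"
| "whp A (Choice C1 C2) ff = (\<lambda>f.
     \<Sum>\<^sub>\<infinity>(\<nu>1, \<nu>2) \<in> {(\<nu>1, \<nu>2). qadd A \<nu>1 \<nu>2 \<noteq> None}.
        ff (the (qadd A \<nu>1 \<nu>2)) * whp A C1 (chi \<nu>1) f * whp A C2 (chi \<nu>2) f)"
| "whp A (Iter C e e') ff = (\<lambda>f. app_opt ff
     (map_option (\<lambda>X. qmul A X e')
        (plfp A (\<lambda>X. Option.bind (sp A C (qmul A X e)) (qadd A f)))))"

end

theory Submission
  imports Defs
begin

text \<open>By induction on the program, whp[C](ff)(f) is ff evaluated at sp[C](f), or 0 when that sum is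
undefined: for a choice, whp[C_i](chi \<nu>)(f) is 1 exactly when \<nu> is the strongest post of the
branch, so the sum over pairs collapses to a single term. Evaluation at a point commutes with
pointwise products of hyperquantities.\<close>

lemma app_opt_chi: "app_opt (chi \<nu>) oq = (if oq = Some \<nu> then 1 else 0)"
  by (simp add: app_opt_def chi_def split: option.split)

lemma app_opt_mult:
  "app_opt (\<lambda>f. c * ff f * gg f) oq = c * app_opt ff oq * app_opt gg oq"
  by (simp add: app_opt_def split: option.split)

lemma whp_Choice_eq_app_opt:
  assumes whp1: "\<And>\<nu>. whp A C1 (chi \<nu>) f = app_opt (chi \<nu>) (sp A C1 f)"
    and whp2: "\<And>\<nu>. whp A C2 (chi \<nu>) f = app_opt (chi \<nu>) (sp A C2 f)"
  shows "whp A (Choice C1 C2) ff f = app_opt ff (sp A (Choice C1 C2) f)"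
proof -
  let ?S = "{(\<nu>1, \<nu>2). qadd A \<nu>1 \<nu>2 \<noteq> None}"
  let ?F = "\<lambda>(\<nu>1, \<nu>2). ff (the (qadd A \<nu>1 \<nu>2)) * whp A C1 (chi \<nu>1) f * whp A C2 (chi \<nu>2) f"
  have chi1: "whp A C1 (chi \<nu>) f = (if sp A C1 f = Some \<nu> then 1 else 0)" for \<nu>
    using whp1 by (simp add: app_opt_chi)
  have chi2: "whp A C2 (chi \<nu>) f = (if sp A C2 f = Some \<nu> then 1 else 0)" for \<nu>
    using whp2 by (simp add: app_opt_chi)
  show ?thesis
  proof (cases "\<exists>g1 g2. sp A C1 f = Some g1 \<and> sp A C2 f = Some g2 \<and> qadd A g1 g2 \<noteq> None")
    case True
    then obtain g1 g2 where g: "sp A C1 f = Some g1" "sp A C2 f = Some g2" "qadd A g1 g2 \<noteq> None"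
      by blast
    have "infsum ?F ?S = infsum ?F {(g1, g2)}"
      by (rule infsum_cong_neutral) (use g in \<open>auto simp: chi1 chi2 split: if_splits\<close>)
    also have "\<dots> = ff (the (qadd A g1 g2))"
      using g by (simp add: chi1 chi2)
    finally show ?thesis
      using g by (auto simp: app_opt_def)
  next
    case False
    have "infsum ?F ?S = 0"
      by (rule infsum_0) (use False in \<open>auto simp: chi1 chi2\<close>)
    moreover have "app_opt ff (sp A (Choice C1 C2) f) = 0"
      using False by (cases "sp A C1 f"; cases "sp A C2 f") (auto simp: app_opt_def)
    ultimately show ?thesis
      by simp
  qed
qed

lemma whp_eq_app_opt_sp: "whp A C ff f = app_opt ff (sp A C f)"
proof (induction C arbitrary: ff f)
  case (Weight w)
  then show ?case by (simp add: app_opt_def)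
next
  case (Seq C1 C2)
  then show ?case by (simp add: app_opt_def split: option.split)
next
  case (Choice C1 C2)
  then show ?case by (rule whp_Choice_eq_app_opt)
qed simp_all

theorem mainTheorem9:
  fixes A :: "'u psr" and C :: "('v::finite, 'u) prog"
    and ff gg :: "(('v \<Rightarrow> nat) \<Rightarrow> 'u) \<Rightarrow> ennreal" and r :: real
  assumes "semiring_assms A" and "r \<ge> 0"
  shows "whp A C (\<lambda>f. ennreal r * ff f * gg f)
         = (\<lambda>f. ennreal r * whp A C ff f * whp A C gg f)"
  by (rule ext) (simp only: whp_eq_app_opt_sp app_opt_mult)

end
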